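(* Let $\boldsymbol{\rho}=(\rho_{ij})_{i,j\in[d]}$ be a $d\times d$ correlation matrix, $d\ge 2$. Define a relation on $[d]$ by $$i \sim j \iff \max_{l\in[d],\, l\neq i,j} |\rho_{il}-\rho_{jl}| = 0 .$$ Then $\sim$ is an equivalence relation, and the partition $G^{\star}$ of $[d]$ into its equivalence classes is the unique coarsest partition $G$ of $[d]$ for which there exist a membership matrix $\mathbf{Z}$ associated with $G$, a $K\times K$ matrix $\boldsymbol{\Pi}$ ($K$ = number of blocks of $G$) and a $d\times d$ diagonal matrix $\boldsymbol{\Gamma}$ with $$\boldsymbol{\rho}=\mathbf{Z}\boldsymbol{\Pi}\mathbf{Z}^{\top}+\boldsymbol{\Gamma}.$$ That is, $G^{\star}$ itself admits such a decomposition, and every partition $G$ admitting such a decomposition is a refinement of $G^{\star}$.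
   Context: $[d]=\{1,\dots,d\}$. For a partition $G=\{G_1,\dots,G_K\}$ of $[d]$ with membership map $z:[d]\to[K]$ ($z(i)=k$ iff $i\in G_k$), the associated membership matrix is the $d\times K$ matrix $\mathbf{Z}=(\mathbf{1}_{\{z(i)=k\}})_{(i,k)\in[d]\times[K]}$. A partition $G$ is finer than (a refinement of) $G'$ if every block of $G$ is contained in a block of $G'$; "coarsest" refers to this partial order. *)

theory Defs
  imports Complex_Main "HOL-Library.Disjoint_Sets"
begin

text \<open>Matrices are real-valued functions on index pairs; [d] = {1..d}.\<close>

definition correlation_matrix :: "nat \<Rightarrow> (nat \<Rightarrow> nat \<Rightarrow> real) \<Rightarrow> bool" where
  "correlation_matrix d \<rho> \<longleftrightarrow>
     (\<forall>i\<in>{1..d}. \<rho> i i = 1) \<and>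
     (\<forall>i\<in>{1..d}. \<forall>j\<in>{1..d}. \<rho> i j = \<rho> j i) \<and>
     (\<forall>x :: nat \<Rightarrow> real. (\<Sum>i=1..d. \<Sum>j=1..d. x i * \<rho> i j * x j) \<ge> 0)"

definition max_diff :: "nat \<Rightarrow> (nat \<Rightarrow> nat \<Rightarrow> real) \<Rightarrow> nat \<Rightarrow> nat \<Rightarrow> real" where
  "max_diff d \<rho> i j =
     (let S = {1..d} - {i, j} in
      if S = {} then 0 else Max ((\<lambda>l. \<bar>\<rho> i l - \<rho> j l\<bar>) ` S))"

definition corr_rel :: "nat \<Rightarrow> (nat \<Rightarrow> nat \<Rightarrow> real) \<Rightarrow> (nat \<times> nat) set" where
  "corr_rel d \<rho> = {(i, j). i \<in> {1..d} \<and> j \<in> {1..d} \<and> max_diff d \<rho> i j = 0}"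

definition membership_map :: "nat \<Rightarrow> nat set set \<Rightarrow> nat \<Rightarrow> (nat \<Rightarrow> nat) \<Rightarrow> bool" where
  "membership_map d G K z \<longleftrightarrow>
     K = card G \<and>
     (\<exists>Gs. bij_betw Gs {1..K} G \<and>
        (\<forall>i\<in>{1..d}. \<forall>k\<in>{1..K}. z i = k \<longleftrightarrow> i \<in> Gs k))"

definition membership_matrix :: "(nat \<Rightarrow> nat) \<Rightarrow> nat \<Rightarrow> nat \<Rightarrow> real" where
  "membership_matrix z i k = (if z i = k then 1 else 0)"

definition admits_decomp :: "nat \<Rightarrow> (nat \<Rightarrow> nat \<Rightarrow> real) \<Rightarrow> nat set set \<Rightarrow> bool" where
  "admits_decomp d \<rho> G \<longleftrightarrow>
     (\<exists>z Pm Gm. membership_map d G (card G) z \<and>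
        (\<forall>i\<in>{1..d}. \<forall>j\<in>{1..d}. i \<noteq> j \<longrightarrow> Gm i j = 0) \<and>
        (\<forall>i\<in>{1..d}. \<forall>j\<in>{1..d}.
           \<rho> i j = (\<Sum>k=1..card G. \<Sum>l=1..card G.
                       membership_matrix z i k * Pm k l * membership_matrix z j l) + Gm i j))"

definition finer :: "'a set set \<Rightarrow> 'a set set \<Rightarrow> bool" where
  "finer G G' \<longleftrightarrow> (\<forall>B\<in>G. \<exists>B'\<in>G'. B \<subseteq> B')"

end

theory Submission
  imports Defs
begin

text \<open>Since \<open>(Z \<Pi> Z\<^sup>T) i j = \<Pi> (z i) (z j)\<close> and \<open>\<Gamma>\<close> only changes the diagonal, \<open>\<rho>\<close> decomposes
  along a partition exactly when its off-diagonal entries \<open>\<rho> i j\<close> depend only on the blocks of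
  \<open>i\<close> and \<open>j\<close>. For symmetric \<open>\<rho>\<close>, the relation \<open>i \<sim> j\<close> (equal rows away from \<open>i\<close> and \<open>j\<close>)
  already forces \<open>\<rho> i j = \<rho> i' j'\<close> whenever \<open>i \<sim> i'\<close>, \<open>j \<sim> j'\<close>, \<open>i \<noteq> j\<close>, \<open>i' \<noteq> j'\<close>; this gives both
  transitivity of \<open>\<sim>\<close> and a decomposition along its classes. Conversely, two members of one block
  of an admissible partition have equal rows off the diagonal, so they are \<open>\<sim>\<close>-equivalent.\<close>

lemma max_diff_eq_0_iff:
  "max_diff d \<rho> i j = 0 \<longleftrightarrow> (\<forall>l\<in>{1..d} - {i, j}. \<rho> i l = \<rho> j l)"
proof (cases "{1..d} - {i, j} = {}")
  case False
  then show ?thesis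
    by (auto simp: max_diff_def Max_eq_iff)
qed (auto simp: max_diff_def)

lemma corr_rel_iff:
  "(i, j) \<in> corr_rel d \<rho> \<longleftrightarrow>
     i \<in> {1..d} \<and> j \<in> {1..d} \<and> (\<forall>l\<in>{1..d}. l \<noteq> i \<longrightarrow> l \<noteq> j \<longrightarrow> \<rho> i l = \<rho> j l)"
  by (auto simp: corr_rel_def max_diff_eq_0_iff)

lemma corr_rel_row:
  "(i, i') \<in> corr_rel d \<rho> \<Longrightarrow> l \<in> {1..d} \<Longrightarrow> l \<noteq> i \<Longrightarrow> l \<noteq> i' \<Longrightarrow> \<rho> i l = \<rho> i' l"
  by (simp add: corr_rel_iff)

lemma corr_rel_pair:
  assumes sym: "\<And>i j. i \<in> {1..d} \<Longrightarrow> j \<in> {1..d} \<Longrightarrow> \<rho> i j = \<rho> j i"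
    and ii': "(i, i') \<in> corr_rel d \<rho>" and jj': "(j, j') \<in> corr_rel d \<rho>"
    and "i \<noteq> j" "i' \<noteq> j'"
  shows "\<rho> i j = \<rho> i' j'"
proof -
  have dom: "i \<in> {1..d}" "i' \<in> {1..d}" "j \<in> {1..d}" "j' \<in> {1..d}"
    using ii' jj' by (auto simp: corr_rel_iff)
  show ?thesis
  proof (cases "j = i'")
    case False
    have "\<rho> i j = \<rho> i' j" using corr_rel_row[OF ii' dom(3)] False \<open>i \<noteq> j\<close> by auto
    also have "\<dots> = \<rho> j i'" using sym dom by simp
    also have "\<dots> = \<rho> j' i'" using corr_rel_row[OF jj' dom(2)] False \<open>i' \<noteq> j'\<close> by auto
    also have "\<dots> = \<rho> i' j'" using sym dom by simp
    finally show ?thesis .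
  next
    case True
    show ?thesis
    proof (cases "j' = i")
      case False
      have "\<rho> i j = \<rho> j i" using sym dom by simp
      also have "\<dots> = \<rho> j' i" using corr_rel_row[OF jj' dom(1)] False \<open>i \<noteq> j\<close> by auto
      also have "\<dots> = \<rho> i j'" using sym dom by simp
      also have "\<dots> = \<rho> i' j'"
        using corr_rel_row[OF ii' dom(4)] False True \<open>i' \<noteq> j'\<close> by auto
      finally show ?thesis .
    qed (use True sym dom in simp)
  qed
qed

lemma equiv_corr_rel:
  assumes sym: "\<And>i j. i \<in> {1..d} \<Longrightarrow> j \<in> {1..d} \<Longrightarrow> \<rho> i j = \<rho> j i"
  shows "equiv {1..d} (corr_rel d \<rho>)"
proof (rule equivI)
  show "refl_on {1..d} (corr_rel d \<rho>)" by (auto simp: refl_on_def corr_rel_iff)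
  show "sym (corr_rel d \<rho>)" by (auto simp: sym_def corr_rel_iff)
  show "trans (corr_rel d \<rho>)"
  proof (rule transI)
    fix i j k assume ij: "(i, j) \<in> corr_rel d \<rho>" and jk: "(j, k) \<in> corr_rel d \<rho>"
    have "\<rho> i l = \<rho> k l" if l: "l \<in> {1..d}" "l \<noteq> i" "l \<noteq> k" for l
    proof (cases "l = j")
      case True
      have "\<rho> i j = \<rho> j k" using corr_rel_pair[OF sym ij jk] l True by auto
      then show ?thesis using sym True l ij jk by (auto simp: corr_rel_iff)
    qed (use corr_rel_row[OF ij] corr_rel_row[OF jk] l in auto)
    then show "(i, k) \<in> corr_rel d \<rho>" using ij jk by (auto simp: corr_rel_iff)
  qed
qed (auto simp: corr_rel_def)

definition offdiag_block_constant :: "('a \<Rightarrow> 'a \<Rightarrow> 'b) \<Rightarrow> 'a set set \<Rightarrow> bool" where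
  "offdiag_block_constant \<rho> G \<longleftrightarrow>
     (\<forall>B\<in>G. \<forall>C\<in>G. \<forall>i\<in>B. \<forall>i'\<in>B. \<forall>j\<in>C. \<forall>j'\<in>C. i \<noteq> j \<longrightarrow> i' \<noteq> j' \<longrightarrow> \<rho> i j = \<rho> i' j')"

lemma offdiag_block_constantI:
  "(\<And>B C i i' j j'. B \<in> G \<Longrightarrow> C \<in> G \<Longrightarrow> i \<in> B \<Longrightarrow> i' \<in> B \<Longrightarrow> j \<in> C \<Longrightarrow> j' \<in> C \<Longrightarrow>
      i \<noteq> j \<Longrightarrow> i' \<noteq> j' \<Longrightarrow> \<rho> i j = \<rho> i' j') \<Longrightarrow> offdiag_block_constant \<rho> G"
  unfolding offdiag_block_constant_def by blast

lemma offdiag_block_constantD: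
  assumes "offdiag_block_constant \<rho> G"
    and "B \<in> G" "C \<in> G" "i \<in> B" "i' \<in> B" "j \<in> C" "j' \<in> C" "i \<noteq> j" "i' \<noteq> j'"
  shows "\<rho> i j = \<rho> i' j'"
  using assms(1)[unfolded offdiag_block_constant_def, rule_format, OF assms(2-)] .

lemma offdiag_block_constant_corr_rel_quotient:
  assumes sym: "\<And>i j. i \<in> {1..d} \<Longrightarrow> j \<in> {1..d} \<Longrightarrow> \<rho> i j = \<rho> j i"
  shows "offdiag_block_constant \<rho> ({1..d} // corr_rel d \<rho>)"
proof (rule offdiag_block_constantI)
  fix B C i i' j j'
  assume B: "B \<in> {1..d} // corr_rel d \<rho>" and C: "C \<in> {1..d} // corr_rel d \<rho>"
    and "i \<in> B" "i' \<in> B" "j \<in> C" "j' \<in> C" "i \<noteq> j" "i' \<noteq> j'"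
  have "(i, i') \<in> corr_rel d \<rho>" "(j, j') \<in> corr_rel d \<rho>"
    using quotient_eq_iff[OF equiv_corr_rel[of d \<rho>, OF sym] B B \<open>i \<in> B\<close> \<open>i' \<in> B\<close>]
      quotient_eq_iff[OF equiv_corr_rel[of d \<rho>, OF sym] C C \<open>j \<in> C\<close> \<open>j' \<in> C\<close>] by blast+
  from corr_rel_pair[OF sym this \<open>i \<noteq> j\<close> \<open>i' \<noteq> j'\<close>] show "\<rho> i j = \<rho> i' j'" .
qed

lemma offdiag_block_constant_imp_finer_corr_rel_quotient:
  assumes G: "partition_on {1..d} G" and const: "offdiag_block_constant \<rho> G"
  shows "finer G ({1..d} // corr_rel d \<rho>)"
  unfolding finer_def
proof
  fix B assume B: "B \<in> G"
  then have "B \<noteq> {}" using partition_onD3[OF G] by blast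
  then obtain i where i: "i \<in> B" by blast
  have B_sub: "B \<subseteq> {1..d}" using B partition_onD1[OF G] by blast
  have "(i, j) \<in> corr_rel d \<rho>" if j: "j \<in> B" for j
  proof -
    have "\<rho> i l = \<rho> j l" if "l \<in> {1..d}" "l \<noteq> i" "l \<noteq> j" for l
    proof -
      have "l \<in> \<Union>G" using \<open>l \<in> {1..d}\<close> partition_onD1[OF G] by (simp only:)
      then obtain C where "C \<in> G" "l \<in> C" by blast
      from offdiag_block_constantD[OF const B this(1) i j this(2) this(2)] that
      show ?thesis by simp
    qed
    with B_sub i j show ?thesis unfolding corr_rel_iff by (intro conjI ballI impI) auto
  qed
  then have "B \<subseteq> corr_rel d \<rho> `` {i}" by blast
  moreover have "corr_rel d \<rho> `` {i} \<in> {1..d} // corr_rel d \<rho>"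
    using i B_sub by (blast intro: quotientI)
  ultimately show "\<exists>B'\<in>{1..d} // corr_rel d \<rho>. B \<subseteq> B'" by blast
qed

lemma membership_map_range:
  assumes G: "partition_on {1..d} G" and z: "membership_map d G K z" and i: "i \<in> {1..d}"
  shows "z i \<in> {1..K}"
proof -
  obtain Gs where Gs: "bij_betw Gs {1..K} G"
    and z_iff: "\<And>k. k \<in> {1..K} \<Longrightarrow> z i = k \<longleftrightarrow> i \<in> Gs k"
    using z i unfolding membership_map_def by blast
  have "\<exists>k\<in>{1..K}. i \<in> Gs k"
    using i partition_onD1[OF G] bij_betw_imp_surj_on[OF Gs] by blast
  then show ?thesis using z_iff by blast
qed

lemma membership_map_eq_iff:
  assumes G: "partition_on {1..d} G" and z: "membership_map d G K z"
    and i: "i \<in> {1..d}" and j: "j \<in> {1..d}"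
  shows "z i = z j \<longleftrightarrow> (\<exists>B\<in>G. i \<in> B \<and> j \<in> B)"
proof -
  obtain Gs where Gs: "bij_betw Gs {1..K} G"
    and z_iff: "\<And>i k. i \<in> {1..d} \<Longrightarrow> k \<in> {1..K} \<Longrightarrow> z i = k \<longleftrightarrow> i \<in> Gs k"
    using z unfolding membership_map_def by blast
  have zi: "z i \<in> {1..K}" by (rule membership_map_range[OF G z i])
  show ?thesis
  proof
    assume "z i = z j"
    then have "i \<in> Gs (z i)" "j \<in> Gs (z i)" using z_iff[OF i zi] z_iff[OF j zi] by simp_all
    moreover have "Gs (z i) \<in> G" using zi bij_betw_apply[OF Gs] by blast
    ultimately show "\<exists>B\<in>G. i \<in> B \<and> j \<in> B" by blast
  next
    assume "\<exists>B\<in>G. i \<in> B \<and> j \<in> B"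
    then obtain k where "k \<in> {1..K}" "i \<in> Gs k" "j \<in> Gs k"
      using bij_betw_imp_surj_on[OF Gs] by blast
    then show "z i = z j" using z_iff[OF i] z_iff[OF j] by blast
  qed
qed

lemma ex_membership_map:
  assumes G: "partition_on {1..d} G"
  shows "\<exists>z. membership_map d G (card G) z"
proof -
  obtain Gs where Gs: "bij_betw Gs {1..card G} G"
    using ex_bij_betw_nat_finite_1 finite_elements[OF finite_atLeastAtMost G] by blast
  have unique: "k = k'" if "k \<in> {1..card G}" "k' \<in> {1..card G}" "i \<in> Gs k" "i \<in> Gs k'" for i k k'
  proof -
    have "Gs k \<in> G" "Gs k' \<in> G" using that(1,2) bij_betw_apply[OF Gs] by blast+
    then have "Gs k = Gs k'" using that(3,4) disjointD[OF partition_onD2[OF G]] by blast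
    then show ?thesis using inj_onD[OF bij_betw_imp_inj_on[OF Gs]] that(1,2) by blast
  qed
  define z where "z i = (SOME k. k \<in> {1..card G} \<and> i \<in> Gs k)" for i
  have "z i = k \<longleftrightarrow> i \<in> Gs k" if i: "i \<in> {1..d}" and k: "k \<in> {1..card G}" for i k
  proof -
    have "\<exists>k. k \<in> {1..card G} \<and> i \<in> Gs k"
      using i partition_onD1[OF G] bij_betw_imp_surj_on[OF Gs] by blast
    then have "z i \<in> {1..card G} \<and> i \<in> Gs (z i)" unfolding z_def by (rule someI_ex)
    then show ?thesis using unique k by blast
  qed
  then show ?thesis unfolding membership_map_def using Gs by blast
qed

lemma membership_matrix_double_sum:
  assumes "z i \<in> {1..K}" "z j \<in> {1..K}"
  shows "(\<Sum>k=1..K. \<Sum>l=1..K. membership_matrix z i k * P k l * membership_matrix z j l) = P (z i) (z j)"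
proof -
  have "(\<Sum>k=1..K. \<Sum>l=1..K. membership_matrix z i k * P k l * membership_matrix z j l)
      = (\<Sum>k=1..K. if k = z i then P k (z j) else 0)"
    using assms(2) by (intro sum.cong refl) (simp add: membership_matrix_def if_distrib cong: if_cong)
  also have "\<dots> = P (z i) (z j)" using assms(1) by simp
  finally show ?thesis .
qed

lemma admits_decomp_iff_offdiag_block_constant:
  assumes G: "partition_on {1..d} G"
  shows "admits_decomp d \<rho> G \<longleftrightarrow> offdiag_block_constant \<rho> G"
proof
  assume "admits_decomp d \<rho> G"
  then obtain z P \<Gamma> where z: "membership_map d G (card G) z"
    and diag: "\<forall>i\<in>{1..d}. \<forall>j\<in>{1..d}. i \<noteq> j \<longrightarrow> \<Gamma> i j = 0"
    and decomp: "\<forall>i\<in>{1..d}. \<forall>j\<in>{1..d}. \<rho> i j = (\<Sum>k=1..card G. \<Sum>l=1..card G.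
                   membership_matrix z i k * P k l * membership_matrix z j l) + \<Gamma> i j"
    unfolding admits_decomp_def by blast
  have offdiag: "\<rho> i j = P (z i) (z j)" if i: "i \<in> {1..d}" and j: "j \<in> {1..d}" and "i \<noteq> j" for i j
  proof -
    have "\<rho> i j = (\<Sum>k=1..card G. \<Sum>l=1..card G.
                   membership_matrix z i k * P k l * membership_matrix z j l) + \<Gamma> i j"
      using decomp i j by blast
    also have "\<dots> = P (z i) (z j)"
      using membership_matrix_double_sum[where z = z,
              OF membership_map_range[OF G z i] membership_map_range[OF G z j]]
        diag i j \<open>i \<noteq> j\<close> by simp
    finally show ?thesis .
  qed
  show "offdiag_block_constant \<rho> G"
  proof (rule offdiag_block_constantI)
    fix B C i i' j j'
    assume B: "B \<in> G" and C: "C \<in> G" and "i \<in> B" "i' \<in> B" "j \<in> C" "j' \<in> C" "i \<noteq> j" "i' \<noteq> j'"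
    moreover have "B \<subseteq> {1..d}" "C \<subseteq> {1..d}"
      using Union_upper[OF B] Union_upper[OF C] partition_onD1[OF G] by simp_all
    ultimately have "z i = z i'" "z j = z j'"
      and "i \<in> {1..d}" "i' \<in> {1..d}" "j \<in> {1..d}" "j' \<in> {1..d}"
      using membership_map_eq_iff[OF G z] by blast+
    then show "\<rho> i j = \<rho> i' j'" using offdiag \<open>i \<noteq> j\<close> \<open>i' \<noteq> j'\<close> by metis
  qed
next
  assume const: "offdiag_block_constant \<rho> G"
  obtain z where z: "membership_map d G (card G) z" using ex_membership_map[OF G] by blast
  \<comment> \<open>the entry at some off-diagonal pair of indices in blocks \<open>k\<close>, \<open>l\<close>; when there is none
    (\<open>k = l\<close>, a singleton block) the value is arbitrary and \<open>\<Gamma>\<close> absorbs it\<close>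
  define P where
    "P k l = (\<lambda>(a, b). \<rho> a b) (SOME (a, b). a \<in> {1..d} \<and> b \<in> {1..d} \<and> a \<noteq> b \<and> z a = k \<and> z b = l)"
    for k l
  have P_offdiag: "P (z i) (z j) = \<rho> i j" if i: "i \<in> {1..d}" and j: "j \<in> {1..d}" and "i \<noteq> j" for i j
  proof -
    let ?Q = "\<lambda>(a, b). a \<in> {1..d} \<and> b \<in> {1..d} \<and> a \<noteq> b \<and> z a = z i \<and> z b = z j"
    obtain a b where ab: "(SOME p. ?Q p) = (a, b)" by (cases "SOME p. ?Q p")
    have "?Q (i, j)" using that by simp
    then have "?Q (a, b)" unfolding ab[symmetric] by (rule someI)
    then have a: "a \<in> {1..d}" and b: "b \<in> {1..d}" and "a \<noteq> b" "z a = z i" "z b = z j" by simp_all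
    then obtain B C where B: "B \<in> G" "a \<in> B" "i \<in> B" and C: "C \<in> G" "b \<in> C" "j \<in> C"
      using membership_map_eq_iff[OF G z a i] membership_map_eq_iff[OF G z b j] by auto
    have "\<rho> a b = \<rho> i j" by (rule offdiag_block_constantD[OF const B(1) C(1) B(2,3) C(2,3)]) fact+
    then show ?thesis unfolding P_def ab by simp
  qed
  define \<Gamma> where "\<Gamma> i j = (if i = j then \<rho> i i - P (z i) (z i) else 0)" for i j
  have "\<forall>i\<in>{1..d}. \<forall>j\<in>{1..d}. i \<noteq> j \<longrightarrow> \<Gamma> i j = 0" by (simp add: \<Gamma>_def)
  moreover have "\<forall>i\<in>{1..d}. \<forall>j\<in>{1..d}. \<rho> i j = (\<Sum>k=1..card G. \<Sum>l=1..card G.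
                   membership_matrix z i k * P k l * membership_matrix z j l) + \<Gamma> i j"
  proof (intro ballI)
    fix i j assume i: "i \<in> {1..d}" and j: "j \<in> {1..d}"
    have "(\<Sum>k=1..card G. \<Sum>l=1..card G. membership_matrix z i k * P k l * membership_matrix z j l)
        = P (z i) (z j)"
      by (rule membership_matrix_double_sum[where z = z,
            OF membership_map_range[OF G z i] membership_map_range[OF G z j]])
    then show "\<rho> i j = (\<Sum>k=1..card G. \<Sum>l=1..card G.
                 membership_matrix z i k * P k l * membership_matrix z j l) + \<Gamma> i j"
      using P_offdiag[OF i j] by (cases "i = j") (simp_all add: \<Gamma>_def)
  qed
  ultimately show "admits_decomp d \<rho> G" unfolding admits_decomp_def using z by blast
qed

theorem theorem1:
  fixes d :: nat and \<rho> :: "nat \<Rightarrow> nat \<Rightarrow> real"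
  assumes "d \<ge> 2" and "correlation_matrix d \<rho>"
  shows "equiv {1..d} (corr_rel d \<rho>)
     \<and> partition_on {1..d} ({1..d} // corr_rel d \<rho>)
     \<and> admits_decomp d \<rho> ({1..d} // corr_rel d \<rho>)
     \<and> (\<forall>G. partition_on {1..d} G \<and> admits_decomp d \<rho> G
            \<longrightarrow> finer G ({1..d} // corr_rel d \<rho>))"
proof -
  have sym: "\<And>i j. i \<in> {1..d} \<Longrightarrow> j \<in> {1..d} \<Longrightarrow> \<rho> i j = \<rho> j i"
    using assms(2) by (simp add: correlation_matrix_def)
  have equiv: "equiv {1..d} (corr_rel d \<rho>)" by (rule equiv_corr_rel[of d \<rho>, OF sym])
  have partition: "partition_on {1..d} ({1..d} // corr_rel d \<rho>)"
    by (rule partition_on_quotient[OF equiv])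
  have "admits_decomp d \<rho> ({1..d} // corr_rel d \<rho>)"
    using admits_decomp_iff_offdiag_block_constant[OF partition]
      offdiag_block_constant_corr_rel_quotient[of d \<rho>, OF sym] by simp
  moreover have "finer G ({1..d} // corr_rel d \<rho>)"
    if "partition_on {1..d} G" "admits_decomp d \<rho> G" for G
    using that admits_decomp_iff_offdiag_block_constant offdiag_block_constant_imp_finer_corr_rel_quotient
    by blast
  ultimately show ?thesis using equiv partition by blast
qed

end
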